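(* Let $(\mathfrak{g},[\cdot,\cdot]_{\mathfrak{g}},\phi_{\mathfrak{g}})$ be a finite-dimensional weakly involutive Hom-Lie algebra and $r\in\mathfrak g\otimes\mathfrak g$ with $\phi_{\mathfrak g}r^\sharp=r^\sharp\phi_{\mathfrak g}^*$. Let $[\cdot,\cdot]_{\mathfrak g^*}$ be defined by $\langle[a,b]_{\mathfrak g^*},x\rangle=\langle\Delta(x),a\otimes b\rangle$ where $\Delta(x)=(\mathrm{ad}_x\otimes\phi_{\mathfrak g}+\phi_{\mathfrak g}\otimes\mathrm{ad}_x)r$. Then for all $a,b\in\mathfrak g^*$, $[r^\sharp\phi_{\mathfrak g}^*(a),r^\sharp\phi_{\mathfrak g}^*(b)]_{\mathfrak g}-r^\sharp\phi_{\mathfrak g}^*[a,b]_{\mathfrak g^*}=[r,r]_{\mathfrak g}(a,b)$.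
   Context: A Hom-Lie algebra $(\mathfrak{g},[\cdot,\cdot]_{\mathfrak{g}},\phi_{\mathfrak{g}})$: skew-symmetric bilinear bracket and linear map with $\phi_{\mathfrak g}[x,y]=[\phi_{\mathfrak g}x,\phi_{\mathfrak g}y]$ and $[\phi_{\mathfrak g}(x),[y,z]]+[\phi_{\mathfrak g}(y),[z,x]]+[\phi_{\mathfrak g}(z),[x,y]]=0$; weakly involutive if $[\phi_{\mathfrak g}^2(x),y]=[x,y]$. $\mathrm{ad}_xy=[x,y]_{\mathfrak g}$. $r^\sharp:\mathfrak g^*\to\mathfrak g$, $\langle r^\sharp(a),b\rangle=\langle r,a\otimes b\rangle$. For $r=\sum_ix_i\otimes y_i$, $[r,r]_{\mathfrak g}=\sum_{i,j}\big([x_i,x_j]_{\mathfrak g}\otimes\phi_{\mathfrak g}(y_i)\otimes\phi_{\mathfrak g}(y_j)+\phi_{\mathfrak g}(x_i)\otimes[y_i,x_j]_{\mathfrak g}\otimes\phi_{\mathfrak g}(y_j)+\phi_{\mathfrak g}(x_i)\otimes\phi_{\mathfrak g}(x_j)\otimes[y_i,y_j]_{\mathfrak g}\big)\in\mathfrak g^{\otimes3}$, and $[r,r]_{\mathfrak g}(a,b)\in\mathfrak g$ is the element with $\langle[r,r]_{\mathfrak g}(a,b),c\rangle=\langle[r,r]_{\mathfrak g},a\otimes b\otimes c\rangle$ for all $c\in\mathfrak g^*$. *)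

theory Defs
  imports Main "HOL-Library.Function_Algebras"
begin

text \<open>A finite-dimensional vector space g over a field 'k is modelled as 'k^n,
  i.e. functions 'n => 'k for a finite index type 'n (coordinates w.r.t. a basis).
  The dual g* is modelled likewise by 'n => 'k with the pairing below.
  A tensor r in g (x) g is given as a finite list of pairs (x_i, y_i),
  r = sum_i x_i (x) y_i (every tensor has this form).\<close>

definition vsmult :: "'k::field \<Rightarrow> ('n \<Rightarrow> 'k) \<Rightarrow> ('n \<Rightarrow> 'k)" where
  "vsmult c x = (\<lambda>i. c * x i)"

definition pair :: "('n::finite \<Rightarrow> 'k::field) \<Rightarrow> ('n \<Rightarrow> 'k) \<Rightarrow> 'k" where
  "pair a x = (\<Sum>i\<in>UNIV. a i * x i)"

definition bvec :: "'n \<Rightarrow> ('n \<Rightarrow> 'k::field)" where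
  "bvec j = (\<lambda>i. if i = j then 1 else 0)"

definition lin_map :: "(('n \<Rightarrow> 'k::field) \<Rightarrow> ('n \<Rightarrow> 'k)) \<Rightarrow> bool" where
  "lin_map f \<longleftrightarrow> (\<forall>x y. f (x + y) = f x + f y) \<and> (\<forall>c x. f (vsmult c x) = vsmult c (f x))"

definition bilin_map :: "(('n \<Rightarrow> 'k::field) \<Rightarrow> ('n \<Rightarrow> 'k) \<Rightarrow> ('n \<Rightarrow> 'k)) \<Rightarrow> bool" where
  "bilin_map B \<longleftrightarrow> (\<forall>x. lin_map (B x)) \<and> (\<forall>y. lin_map (\<lambda>x. B x y))"

definition hom_lie :: "(('n \<Rightarrow> 'k::field) \<Rightarrow> ('n \<Rightarrow> 'k) \<Rightarrow> ('n \<Rightarrow> 'k)) \<Rightarrow> (('n \<Rightarrow> 'k) \<Rightarrow> ('n \<Rightarrow> 'k)) \<Rightarrow> bool" where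
  "hom_lie br phi \<longleftrightarrow> bilin_map br \<and> lin_map phi
     \<and> (\<forall>x y. br x y = - br y x)
     \<and> (\<forall>x y. phi (br x y) = br (phi x) (phi y))
     \<and> (\<forall>x y z. br (phi x) (br y z) + br (phi y) (br z x) + br (phi z) (br x y) = 0)"

definition weakly_involutive :: "(('n \<Rightarrow> 'k::field) \<Rightarrow> ('n \<Rightarrow> 'k) \<Rightarrow> ('n \<Rightarrow> 'k)) \<Rightarrow> (('n \<Rightarrow> 'k) \<Rightarrow> ('n \<Rightarrow> 'k)) \<Rightarrow> bool" where
  "weakly_involutive br phi \<longleftrightarrow> (\<forall>x y. br (phi (phi x)) y = br x y)"

text \<open>Dual map phi*: <phi* a, x> = <a, phi x>.\<close>
definition dual_map :: "(('n::finite \<Rightarrow> 'k::field) \<Rightarrow> ('n \<Rightarrow> 'k)) \<Rightarrow> ('n \<Rightarrow> 'k) \<Rightarrow> ('n \<Rightarrow> 'k)" where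
  "dual_map phi a = (\<lambda>j. pair a (phi (bvec j)))"

text \<open>r-sharp: <r#(a), b> = <r, a (x) b>, so r#(a) = sum_i <a,x_i> y_i.\<close>
definition rsharp :: "(('n::finite \<Rightarrow> 'k::field) \<times> ('n \<Rightarrow> 'k)) list \<Rightarrow> ('n \<Rightarrow> 'k) \<Rightarrow> ('n \<Rightarrow> 'k)" where
  "rsharp r a = (\<Sum>(x,y)\<leftarrow>r. vsmult (pair a x) y)"

text \<open><[a,b]_{g*}, x> = <Delta(x), a (x) b>, Delta(x) = (ad_x (x) phi + phi (x) ad_x) r.\<close>
definition dual_bracket :: "(('n::finite \<Rightarrow> 'k::field) \<Rightarrow> ('n \<Rightarrow> 'k) \<Rightarrow> ('n \<Rightarrow> 'k)) \<Rightarrow> (('n \<Rightarrow> 'k) \<Rightarrow> ('n \<Rightarrow> 'k))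
     \<Rightarrow> (('n \<Rightarrow> 'k) \<times> ('n \<Rightarrow> 'k)) list \<Rightarrow> ('n \<Rightarrow> 'k) \<Rightarrow> ('n \<Rightarrow> 'k) \<Rightarrow> ('n \<Rightarrow> 'k)" where
  "dual_bracket br phi r a b = (\<lambda>j. let x = bvec j in
     (\<Sum>(xi,yi)\<leftarrow>r. pair a (br x xi) * pair b (phi yi) + pair a (phi xi) * pair b (br x yi)))"

text \<open>[r,r](a,b) in g: <[r,r](a,b), c> = <[r,r], a (x) b (x) c>.\<close>
definition rr_bracket :: "(('n::finite \<Rightarrow> 'k::field) \<Rightarrow> ('n \<Rightarrow> 'k) \<Rightarrow> ('n \<Rightarrow> 'k)) \<Rightarrow> (('n \<Rightarrow> 'k) \<Rightarrow> ('n \<Rightarrow> 'k))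
     \<Rightarrow> (('n \<Rightarrow> 'k) \<times> ('n \<Rightarrow> 'k)) list \<Rightarrow> ('n \<Rightarrow> 'k) \<Rightarrow> ('n \<Rightarrow> 'k) \<Rightarrow> ('n \<Rightarrow> 'k)" where
  "rr_bracket br phi r a b =
     (\<Sum>(xi,yi)\<leftarrow>r. \<Sum>(xj,yj)\<leftarrow>r.
        vsmult (pair a (br xi xj) * pair b (phi yi)) (phi yj)
      + vsmult (pair a (phi xi) * pair b (br yi xj)) (phi yj)
      + vsmult (pair a (phi xi) * pair b (phi xj)) (br yi yj))"

end

theory Submission
  imports Defs
begin

text \<open>Write r = sum_i x_i (x) y_i. Both sides of the identity are then double sums over i, j, and
  [r#(phi* a), r#(phi* b)] is exactly the third summand of [r,r](a,b). For the other two summands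
  apply the hypothesis phi r# = r# phi* to the functional c o ad_u: together with skew-symmetry it
  gives sum_j <c, [u, x_j]> phi y_j = - sum_j <c, [phi x_j, u]> y_j, and the choices (c, u) = (a, x_i)
  and (c, u) = (b, y_i) turn the first two summands of [r,r](a,b) into - r# phi* [a,b]_g*.
  Only bilinearity, skew-symmetry and linearity of phi enter.\<close>

lemma sum_apply: "(\<Sum>i\<in>A. f i) j = (\<Sum>i\<in>A. f i j)"
  by (induction A rule: infinite_finite_induct) simp_all

lemma sum_list_apply: "(\<Sum>i\<leftarrow>xs. f i) j = (\<Sum>i\<leftarrow>xs. f i j)"
  by (induction xs) simp_all

lemma sum_list_uminus:
  fixes f :: "'a \<Rightarrow> 'b::ab_group_add"
  shows "(\<Sum>x\<leftarrow>xs. - f x) = - (\<Sum>x\<leftarrow>xs. f x)"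
  by (induction xs) simp_all

lemma sum_list_swap:
  fixes h :: "'a \<Rightarrow> 'b \<Rightarrow> 'c::comm_monoid_add"
  shows "(\<Sum>i\<leftarrow>xs. \<Sum>j\<leftarrow>ys. h i j) = (\<Sum>j\<leftarrow>ys. \<Sum>i\<leftarrow>xs. h i j)"
  by (induction xs) (simp_all add: sum_list_addf)

lemma vsmult_vsmult: "vsmult c (vsmult d x) = vsmult (c * d) x"
  by (simp add: vsmult_def mult.assoc)

lemma vsmult_uminus_left: "vsmult (- c) x = - vsmult c x"
  by (simp add: vsmult_def fun_eq_iff)

lemma vsmult_uminus_right: "vsmult c (- x) = - vsmult c x"
  by (simp add: vsmult_def fun_eq_iff)

lemma vsmult_add_left: "vsmult (c + d) x = vsmult c x + vsmult d x"
  by (simp add: vsmult_def fun_eq_iff distrib_right)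

lemma vsmult_sum_list_left: "vsmult (\<Sum>i\<leftarrow>xs. f i) x = (\<Sum>i\<leftarrow>xs. vsmult (f i) x)"
  by (induction xs) (simp_all add: vsmult_def fun_eq_iff distrib_right)

lemma lin_map_add: "lin_map f \<Longrightarrow> f (x + y) = f x + f y"
  by (simp add: lin_map_def)

lemma lin_map_vsmult_commute: "lin_map f \<Longrightarrow> f (vsmult c x) = vsmult c (f x)"
  by (simp add: lin_map_def)

lemma lin_map_zero: "lin_map f \<Longrightarrow> f 0 = 0"
  using lin_map_vsmult_commute[of f 0 0] by (simp add: vsmult_def zero_fun_def)

lemma lin_map_vsmult: "lin_map (vsmult c)"
  by (simp add: lin_map_def vsmult_def fun_eq_iff algebra_simps)

text \<open>Here plain simp expands the pointwise 0 and + of the function space before the linearity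
  rules can fire, hence the explicit rewriting.\<close>

lemma lin_map_sum:
  assumes "lin_map f"
  shows "f (\<Sum>i\<in>A. g i) = (\<Sum>i\<in>A. f (g i))"
proof (induction A rule: infinite_finite_induct)
  case (infinite A)
  then show ?case by (metis sum.infinite lin_map_zero[OF assms])
next
  case empty
  then show ?case by (metis sum.empty lin_map_zero[OF assms])
next
  case (insert x F)
  then show ?case by (metis sum.insert lin_map_add[OF assms])
qed

lemma lin_map_sum_list:
  assumes "lin_map f"
  shows "f (\<Sum>i\<leftarrow>xs. g i) = (\<Sum>i\<leftarrow>xs. f (g i))"
  by (induction xs)
    (simp_all only: list.map sum_list.Nil sum_list.Cons lin_map_zero[OF assms] lin_map_add[OF assms])

lemma bilin_map_sum_list:
  assumes "bilin_map B"
  shows "B (\<Sum>i\<leftarrow>xs. vsmult (f i) (v i)) (\<Sum>j\<leftarrow>ys. vsmult (g j) (w j))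
    = (\<Sum>i\<leftarrow>xs. \<Sum>j\<leftarrow>ys. vsmult (f i * g j) (B (v i) (w j)))"
proof -
  have left: "lin_map (\<lambda>x. B x y)" and right: "lin_map (B x)" for x y
    using assms by (simp_all add: bilin_map_def)
  have "B (\<Sum>i\<leftarrow>xs. vsmult (f i) (v i)) y = (\<Sum>i\<leftarrow>xs. vsmult (f i) (B (v i) y))" for y
    by (simp add: lin_map_sum_list[OF left] lin_map_vsmult_commute[OF left])
  then show ?thesis
    by (simp add: lin_map_sum_list[OF right] lin_map_vsmult_commute[OF right]
        lin_map_sum_list[OF lin_map_vsmult] vsmult_vsmult)
      (subst sum_list_swap, simp add: mult.commute)
qed

lemma basis_expansion: "(x :: 'n::finite \<Rightarrow> 'k::field) = (\<Sum>j\<in>UNIV. vsmult (x j) (bvec j))"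
  by (simp add: fun_eq_iff sum_apply vsmult_def bvec_def if_distrib[where f="(*) _"] cong: if_cong)

lemma pair_vsmult: "pair a (vsmult c x) = c * pair a x"
  by (simp add: pair_def vsmult_def sum_distrib_left mult.left_commute)

lemma pair_uminus: "pair a (- x) = - pair a x"
  by (simp add: pair_def sum_negf)

lemma pair_sum: "pair a (\<Sum>i\<in>A. g i) = (\<Sum>i\<in>A. pair a (g i))"
  by (simp add: pair_def sum_apply sum_distrib_left) (rule sum.swap)

lemma pair_zero_left: "pair 0 x = 0"
  by (simp add: pair_def)

lemma pair_add_left: "pair (a + b) x = pair a x + pair b x"
  by (simp add: pair_def distrib_right sum.distrib)

lemma pair_vsmult_left: "pair (vsmult c a) x = c * pair a x"
  by (simp add: pair_def vsmult_def sum_distrib_left mult.assoc)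

lemma pair_sum_list_left: "pair (\<Sum>i\<leftarrow>xs. g i) x = (\<Sum>i\<leftarrow>xs. pair (g i) x)"
  by (induction xs) (simp_all only: list.map sum_list.Nil sum_list.Cons pair_add_left pair_zero_left)

lemma pair_dual_map:
  assumes "lin_map f"
  shows "pair (dual_map f a) x = pair a (f x)"
proof -
  have "pair a (f x) = pair a (f (\<Sum>j\<in>UNIV. vsmult (x j) (bvec j)))"
    by (subst basis_expansion) (rule refl)
  also have "\<dots> = (\<Sum>j\<in>UNIV. x j * pair a (f (bvec j)))"
    by (simp add: lin_map_sum[OF assms] lin_map_vsmult_commute[OF assms] pair_sum pair_vsmult)
  finally show ?thesis
    by (simp add: pair_def dual_map_def mult.commute)
qed

lemma rsharp_dual_map:
  "lin_map f \<Longrightarrow> rsharp r (dual_map f c) = (\<Sum>(x, y)\<leftarrow>r. vsmult (pair c (f x)) y)"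
  by (simp add: rsharp_def pair_dual_map)

lemma rsharp_compat_shift:
  assumes compat: "\<And>a. phi (rsharp r a) = rsharp r (dual_map phi a)"
    and phi: "lin_map phi" and f: "lin_map f"
  shows "(\<Sum>(x, y)\<leftarrow>r. vsmult (pair c (f x)) (phi y)) = (\<Sum>(x, y)\<leftarrow>r. vsmult (pair c (f (phi x))) y)"
proof -
  have "(\<Sum>(x, y)\<leftarrow>r. vsmult (pair c (f x)) (phi y)) = phi (rsharp r (dual_map f c))"
    by (simp add: rsharp_dual_map[OF f] lin_map_sum_list[OF phi] lin_map_vsmult_commute[OF phi] split_def)
  also have "\<dots> = rsharp r (dual_map phi (dual_map f c))"
    by (rule compat)
  also have "\<dots> = (\<Sum>(x, y)\<leftarrow>r. vsmult (pair c (f (phi x))) y)"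
    by (simp add: rsharp_dual_map[OF phi] pair_dual_map[OF f])
  finally show ?thesis .
qed

lemma pair_dual_bracket:
  assumes "bilin_map br"
  shows "pair (dual_bracket br phi r a b) z
    = (\<Sum>(x, y)\<leftarrow>r. pair a (br z x) * pair b (phi y) + pair a (phi x) * pair b (br z y))"
proof -
  have left: "lin_map (\<lambda>x. br x y)" for y
    using assms by (simp add: bilin_map_def)
  have "dual_bracket br phi r a b = (\<Sum>(x, y)\<leftarrow>r.
      vsmult (pair b (phi y)) (dual_map (\<lambda>z. br z x) a) + vsmult (pair a (phi x)) (dual_map (\<lambda>z. br z y) b))"
    by (simp add: dual_bracket_def dual_map_def fun_eq_iff sum_list_apply vsmult_def split_def Let_def
        mult.commute)
  then show ?thesis
    by (simp add: pair_sum_list_left pair_add_left pair_vsmult_left pair_dual_map[OF left] split_def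
        mult.commute)
qed

lemma rsharp_compat_skew:
  assumes compat: "\<And>a. phi (rsharp r a) = rsharp r (dual_map phi a)"
    and phi: "lin_map phi" and bilin: "bilin_map br" and skew: "\<And>x y. br x y = - br y x"
  shows "(\<Sum>(x, y)\<leftarrow>r. vsmult (pair c (br (phi x) u)) y) = - (\<Sum>(x, y)\<leftarrow>r. vsmult (pair c (br u x)) (phi y))"
proof -
  have right: "lin_map (br u)"
    using bilin by (simp add: bilin_map_def)
  have "br u (phi x) = - br (phi x) u" for x
    by (rule skew)
  then show ?thesis
    using rsharp_compat_shift[OF compat phi right, of c]
    by (simp add: pair_uminus vsmult_uminus_left sum_list_uminus split_def)
qed

lemma bracket_rsharp_dual_map:
  assumes "lin_map phi" and "bilin_map br"
  shows "br (rsharp r (dual_map phi a)) (rsharp r (dual_map phi b))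
    = (\<Sum>(xi, yi)\<leftarrow>r. \<Sum>(xj, yj)\<leftarrow>r. vsmult (pair a (phi xi) * pair b (phi xj)) (br yi yj))"
  by (simp add: rsharp_dual_map[OF assms(1)] bilin_map_sum_list[OF assms(2)] split_def)

lemma rr_bracket_split:
  "rr_bracket br phi r a b =
      (\<Sum>(xi, yi)\<leftarrow>r. vsmult (pair b (phi yi)) (\<Sum>(xj, yj)\<leftarrow>r. vsmult (pair a (br xi xj)) (phi yj)))
    + (\<Sum>(xi, yi)\<leftarrow>r. vsmult (pair a (phi xi)) (\<Sum>(xj, yj)\<leftarrow>r. vsmult (pair b (br yi xj)) (phi yj)))
    + (\<Sum>(xi, yi)\<leftarrow>r. \<Sum>(xj, yj)\<leftarrow>r. vsmult (pair a (phi xi) * pair b (phi xj)) (br yi yj))"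
  by (simp add: rr_bracket_def sum_list_addf lin_map_sum_list[OF lin_map_vsmult] vsmult_vsmult split_def
      mult.commute)

lemma rsharp_dual_map_dual_bracket:
  assumes compat: "\<And>a. phi (rsharp r a) = rsharp r (dual_map phi a)"
    and phi: "lin_map phi" and bilin: "bilin_map br" and skew: "\<And>x y. br x y = - br y x"
  shows "rsharp r (dual_map phi (dual_bracket br phi r a b)) =
    - ((\<Sum>(xi, yi)\<leftarrow>r. vsmult (pair b (phi yi)) (\<Sum>(xj, yj)\<leftarrow>r. vsmult (pair a (br xi xj)) (phi yj)))
     + (\<Sum>(xi, yi)\<leftarrow>r. vsmult (pair a (phi xi)) (\<Sum>(xj, yj)\<leftarrow>r. vsmult (pair b (br yi xj)) (phi yj))))"
proof -
  have "rsharp r (dual_map phi (dual_bracket br phi r a b)) = (\<Sum>(xj, yj)\<leftarrow>r. \<Sum>(xi, yi)\<leftarrow>r.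
      vsmult (pair b (phi yi)) (vsmult (pair a (br (phi xj) xi)) yj)
      + vsmult (pair a (phi xi)) (vsmult (pair b (br (phi xj) yi)) yj))"
    by (simp add: rsharp_dual_map[OF phi] pair_dual_bracket[OF bilin] vsmult_sum_list_left vsmult_add_left
        vsmult_vsmult split_def mult.commute)
  also have "\<dots> = (\<Sum>(xi, yi)\<leftarrow>r.
      vsmult (pair b (phi yi)) (\<Sum>(xj, yj)\<leftarrow>r. vsmult (pair a (br (phi xj) xi)) yj)
      + vsmult (pair a (phi xi)) (\<Sum>(xj, yj)\<leftarrow>r. vsmult (pair b (br (phi xj) yi)) yj))"
    unfolding split_def
    by (subst sum_list_swap) (simp add: lin_map_sum_list[OF lin_map_vsmult] sum_list_addf)
  also have "\<dots> = - ((\<Sum>(xi, yi)\<leftarrow>r. vsmult (pair b (phi yi)) (\<Sum>(xj, yj)\<leftarrow>r. vsmult (pair a (br xi xj)) (phi yj)))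
     + (\<Sum>(xi, yi)\<leftarrow>r. vsmult (pair a (phi xi)) (\<Sum>(xj, yj)\<leftarrow>r. vsmult (pair b (br yi xj)) (phi yj))))"
    by (simp add: rsharp_compat_skew[OF compat phi bilin skew, unfolded split_def] vsmult_uminus_right
        sum_list_subtractf sum_list_uminus split_def)
  finally show ?thesis .
qed

theorem lemma4p9:
  fixes br :: "('n::finite \<Rightarrow> 'k::field) \<Rightarrow> ('n \<Rightarrow> 'k) \<Rightarrow> ('n \<Rightarrow> 'k)"
    and phi :: "('n \<Rightarrow> 'k) \<Rightarrow> ('n \<Rightarrow> 'k)"
    and r :: "(('n \<Rightarrow> 'k) \<times> ('n \<Rightarrow> 'k)) list"
  assumes "hom_lie br phi"
    and "weakly_involutive br phi"
    and "\<And>a. phi (rsharp r a) = rsharp r (dual_map phi a)"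
  shows "\<forall>a b. br (rsharp r (dual_map phi a)) (rsharp r (dual_map phi b))
              - rsharp r (dual_map phi (dual_bracket br phi r a b))
            = rr_bracket br phi r a b"
proof (intro allI)
  fix a b
  have phi: "lin_map phi" and bilin: "bilin_map br" and skew: "\<And>x y. br x y = - br y x"
    using assms(1) unfolding hom_lie_def by blast+
  show "br (rsharp r (dual_map phi a)) (rsharp r (dual_map phi b))
      - rsharp r (dual_map phi (dual_bracket br phi r a b)) = rr_bracket br phi r a b"
    unfolding bracket_rsharp_dual_map[OF phi bilin] rsharp_dual_map_dual_bracket[OF assms(3) phi bilin skew]
      rr_bracket_split
    by (simp add: algebra_simps)
qed

end
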